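(* Let $1\le s<t\le n$ and $0<m<\binom{n}{s}$, and let $m+1=\sum_{k=0}^{\ell-1}\binom{n_{s-k}}{s-k}$ be the $s$-cascade representation of $m+1$ (of length $\ell$). Then $k^t_s(m+1)>k^t_s(m)$ if and only if $t\le\ell+n_{s-\ell+1}-1$.
   Context: Colex order on finite subsets of $\mathbb N$: $A<B$ iff $\max(A\triangle B)\in B$. $\mathbb C^{(s)}(m)$ is the $s$-graph whose edges are the first $m$ $s$-subsets of $\mathbb N$ in colex order, and $k^t_s(m)$ is the number of $t$-sets all of whose $s$-subsets are edges of $\mathbb C^{(s)}(m)$. A strict $s$-cascade is an integer sequence $n_s>n_{s-1}>\dots>n_{s-\ell+1}$ with $0\le\ell\le s$ and $n_{s-k}\ge s-k$ for all $k$; every $m\ge0$ has a unique representation $m=\sum_{k=0}^{\ell-1}\binom{n_{s-k}}{s-k}$ by a strict $s$-cascade (its $s$-cascade representation, of length $\ell$). *)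

theory Defs
  imports Main
begin

definition colex_less :: "nat set \<Rightarrow> nat set \<Rightarrow> bool" where
  "colex_less A B \<longleftrightarrow> A \<noteq> B \<and> Max ((A - B) \<union> (B - A)) \<in> B"

definition ssets :: "nat \<Rightarrow> nat set set" where
  "ssets s = {A. finite A \<and> card A = s}"

text \<open>Edges of the colex graph C^(s)(m): the first m s-sets in colex order,
  i.e. those s-sets having fewer than m colex-predecessors among the s-sets.\<close>
definition colex_graph :: "nat \<Rightarrow> nat \<Rightarrow> nat set set" where
  "colex_graph s m = {A \<in> ssets s. card {B \<in> ssets s. colex_less B A} < m}"

definition kts :: "nat \<Rightarrow> nat \<Rightarrow> nat \<Rightarrow> nat" where
  "kts t s m = card {T \<in> ssets t. \<forall>S. S \<subseteq> T \<and> card S = s \<longrightarrow> S \<in> colex_graph s m}"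

text \<open>Strict s-cascade, as a list ns with ns!k = n_(s-k), of length l = length ns.\<close>
definition strict_cascade :: "nat \<Rightarrow> nat list \<Rightarrow> bool" where
  "strict_cascade s ns \<longleftrightarrow> length ns \<le> s
     \<and> (\<forall>k. Suc k < length ns \<longrightarrow> ns ! Suc k < ns ! k)
     \<and> (\<forall>k < length ns. s - k \<le> ns ! k)"

definition cascade_value :: "nat \<Rightarrow> nat list \<Rightarrow> nat" where
  "cascade_value s ns = (\<Sum>k < length ns. (ns ! k) choose (s - k))"

end

(*
  Identify a finite set A of naturals with its binary weight \<Sum>a\<in>A. 2^a: the colex order is the
  order of weights, and the number of s-sets below {a_1 > ... > a_s} is the cascade sum
  \<Sum>k. a_k choose (s+1-k).  Hence C^(s)(m+1) arises from C^(s)(m) by adding the single s-set E of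
  rank m.  By the hockey-stick identity (N choose j) - 1 = \<Sum>i<j. (N-1-i) choose (j-i), E is
  obtained from the cascade of m+1 by replacing its last term (N choose j) by the elements
  N-1, ..., N-j, so min E = N - j with N = n_(s-l+1), j = s-l+1.
  A t-set that is a clique of C^(s)(m+1) but not of C^(s)(m) must contain E, and all its other
  elements lie below min E: exchanging min E for a larger element would give an s-subset of
  rank > m.  Conversely E \<union> {0, ..., t-s-1} is such a clique when t - s \<le> min E.  So k^t_s
  increases iff t - s \<le> N - j, i.e. t \<le> l + n_(s-l+1) - 1.
*)
theory Submission
  imports Defs
begin

section \<open>Colex order as the order of binary weights\<close>

definition colex_weight :: "nat set \<Rightarrow> nat" where
  "colex_weight A = (\<Sum>a\<in>A. 2 ^ a)"

lemma colex_weight_insert: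
  "finite A \<Longrightarrow> a \<notin> A \<Longrightarrow> colex_weight (insert a A) = 2 ^ a + colex_weight A"
  unfolding colex_weight_def by simp

lemma colex_weight_remove:
  assumes "finite A" "a \<in> A"
  shows "colex_weight A = 2 ^ a + colex_weight (A - {a})"
  using colex_weight_insert[of "A - {a}" a] assms by (simp add: insert_absorb)

lemma colex_weight_less_power_iff:
  assumes "finite A"
  shows "colex_weight A < 2 ^ x \<longleftrightarrow> A \<subseteq> {..<x}"
proof
  assume less: "colex_weight A < 2 ^ x"
  show "A \<subseteq> {..<x}"
  proof
    fix a assume "a \<in> A"
    then have "2 ^ a \<le> colex_weight A"
      unfolding colex_weight_def using assms by (metis member_le_sum zero_le)
    with less have "(2::nat) ^ a < 2 ^ x" by linarith
    then show "a \<in> {..<x}" by simp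
  qed
next
  assume "A \<subseteq> {..<x}"
  then have "colex_weight A \<le> (\<Sum>i<x. 2 ^ i)"
    unfolding colex_weight_def by (intro sum_mono2) auto
  also have "(\<Sum>i<x. 2 ^ i) < (2::nat) ^ x"
    by (induction x) auto
  finally show "colex_weight A < 2 ^ x" .
qed

lemma colex_weight_less:
  assumes "finite A" "finite B" "x \<in> B - A" "\<forall>y\<in>A - B. y < x"
  shows "colex_weight A < colex_weight B"
proof -
  have "colex_weight A = colex_weight (A \<inter> B) + colex_weight (A - B)"
    unfolding colex_weight_def using assms(1) by (rule sum.Int_Diff)
  moreover have "colex_weight B = colex_weight (A \<inter> B) + colex_weight (B - A)"
    unfolding colex_weight_def using assms(2) by (metis Int_commute sum.Int_Diff)
  moreover have "colex_weight (A - B) < 2 ^ x"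
    using assms by (subst colex_weight_less_power_iff) auto
  moreover have "2 ^ x \<le> colex_weight (B - A)"
    using assms colex_weight_remove[of "B - A" x] by simp
  ultimately show ?thesis by linarith
qed

lemma colex_less_imp_weight_less:
  assumes "finite A" "finite B" "colex_less A B"
  shows "colex_weight A < colex_weight B"
proof -
  define D where "D = (A - B) \<union> (B - A)"
  have "finite D" "D \<noteq> {}"
    using assms unfolding D_def colex_less_def by auto
  then have le_Max: "y \<le> Max D" if "y \<in> D" for y
    using that by simp
  have Max_B: "Max D \<in> B - A"
    using Max_in[OF \<open>finite D\<close> \<open>D \<noteq> {}\<close>] assms(3)
    unfolding colex_less_def D_def by auto
  moreover have "\<forall>y\<in>A - B. y < Max D"
  proof
    fix y assume "y \<in> A - B"
    then have "y \<le> Max D" "y \<noteq> Max D"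
      using le_Max Max_B unfolding D_def by auto
    then show "y < Max D" by simp
  qed
  ultimately show ?thesis
    using assms(1,2) by (rule colex_weight_less[rotated 2])
qed

lemma colex_less_total:
  assumes "finite A" "finite B" "A \<noteq> B"
  shows "colex_less A B \<or> colex_less B A"
proof -
  have "finite ((A - B) \<union> (B - A))" "(A - B) \<union> (B - A) \<noteq> {}"
    using assms by auto
  then have "Max ((A - B) \<union> (B - A)) \<in> (A - B) \<union> (B - A)"
    by (rule Max_in)
  then show ?thesis
    using assms(3) unfolding colex_less_def by (auto simp: Un_commute)
qed

lemma colex_less_iff_weight_less:
  assumes "finite A" "finite B"
  shows "colex_less A B \<longleftrightarrow> colex_weight A < colex_weight B"
  using assms colex_less_imp_weight_less colex_less_total
  by (metis less_asym less_irrefl)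

lemma colex_weight_inj_on: "inj_on colex_weight {A. finite A}"
  by (intro inj_onI) (metis colex_less_iff_weight_less colex_less_total less_irrefl mem_Collect_eq)

section \<open>Colex rank and cascades\<close>

definition colex_rank :: "nat \<Rightarrow> nat set \<Rightarrow> nat" where
  "colex_rank s A = card {B \<in> ssets s. colex_weight B < colex_weight A}"

lemma finite_ssets_weight_less: "finite {B \<in> ssets s. colex_weight B < K}"
proof (rule finite_subset)
  show "{B \<in> ssets s. colex_weight B < K} \<subseteq> Pow {..<K}"
  proof clarify
    fix B b assume B: "B \<in> ssets s" "colex_weight B < K" "b \<in> B"
    have "colex_weight B < 2 ^ K"
      using B(2) less_exp[of K] by linarith
    then show "b < K"
      using B unfolding ssets_def by (auto simp: colex_weight_less_power_iff)
  qed
qed simp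

lemma colex_rank_strict_mono:
  assumes "A \<in> ssets s" "B \<in> ssets s" "colex_weight A < colex_weight B"
  shows "colex_rank s A < colex_rank s B"
  unfolding colex_rank_def using assms finite_ssets_weight_less
  by (intro psubset_card_mono) auto

lemma colex_rank_inj_on: "inj_on (colex_rank s) (ssets s)"
proof (rule inj_onI)
  fix A B assume AB: "A \<in> ssets s" "B \<in> ssets s" "colex_rank s A = colex_rank s B"
  then have "colex_weight A = colex_weight B"
    using colex_rank_strict_mono[of A s B] colex_rank_strict_mono[of B s A]
    by (metis less_irrefl nat_neq_iff)
  then show "A = B"
    using AB colex_weight_inj_on unfolding ssets_def inj_on_def by blast
qed

lemma colex_graph_eq: "colex_graph s k = {A \<in> ssets s. colex_rank s A < k}"
proof -
  have "{B \<in> ssets s. colex_less B A} = {B \<in> ssets s. colex_weight B < colex_weight A}"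
    if "A \<in> ssets s" for A
    using that colex_less_iff_weight_less unfolding ssets_def by auto
  then show ?thesis
    unfolding colex_graph_def colex_rank_def by auto
qed

lemma Diff_Max_subset_lessThan:
  fixes A :: "'a::linorder set"
  shows "finite A \<Longrightarrow> A - {Max A} \<subseteq> {..<Max A}"
  using Max_ge le_neq_implies_less by fastforce

lemma ssets_weight_less_Max_split:
  assumes "finite A" "A \<noteq> {}"
  defines "a \<equiv> Max A"
  shows "{B \<in> ssets (Suc s). colex_weight B < colex_weight A} =
         {B. B \<subseteq> {..<a} \<and> card B = Suc s}
         \<union> insert a ` {B \<in> ssets s. colex_weight B < colex_weight (A - {a})}"
    (is "?L = ?X \<union> insert a ` ?Y")
proof -
  have "a \<in> A" "A - {a} \<subseteq> {..<a}"
    using assms Diff_Max_subset_lessThan by auto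
  then have wA: "colex_weight A = 2 ^ a + colex_weight (A - {a})"
    and wA': "colex_weight (A - {a}) < 2 ^ a"
    using assms(1) colex_weight_remove colex_weight_less_power_iff by auto
  have Y_below: "B \<subseteq> {..<a}" if "B \<in> ?Y" for B
    using that wA' colex_weight_less_power_iff[of B a] unfolding ssets_def by auto
  show ?thesis
  proof (intro equalityI subsetI)
    fix B assume "B \<in> ?L"
    then have B: "finite B" "card B = Suc s" "colex_weight B < colex_weight A"
      unfolding ssets_def by auto
    then have "B \<subseteq> {..<Suc a}"
      using wA wA' colex_weight_less_power_iff[of B "Suc a"] by simp
    show "B \<in> ?X \<union> insert a ` ?Y"
    proof (cases "a \<in> B")
      case True
      then have "B - {a} \<in> ?Y"
        using B wA colex_weight_remove[of B a] unfolding ssets_def by auto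
      moreover have "B = insert a (B - {a})"
        using True by auto
      ultimately show ?thesis by blast
    next
      case False
      with \<open>B \<subseteq> {..<Suc a}\<close> have "B \<subseteq> {..<a}"
        by (auto simp: less_Suc_eq)
      then show ?thesis using B by auto
    qed
  next
    fix B assume "B \<in> ?X \<union> insert a ` ?Y"
    then show "B \<in> ?L"
    proof
      assume "B \<in> ?X"
      then have "finite B" "card B = Suc s" "colex_weight B < 2 ^ a"
        using finite_subset colex_weight_less_power_iff by auto
      then show ?thesis
        using wA unfolding ssets_def by auto
    next
      assume "B \<in> insert a ` ?Y"
      then obtain B' where "B' \<in> ?Y" "B = insert a B'" by blast
      moreover have "a \<notin> B'"
        using Y_below[OF \<open>B' \<in> ?Y\<close>] by auto
      ultimately show ?thesis
        using wA colex_weight_insert[of B' a] unfolding ssets_def by auto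
    qed
  qed
qed

lemma colex_rank_Max:
  assumes "A \<in> ssets (Suc s)"
  defines "a \<equiv> Max A"
  shows "colex_rank (Suc s) A = (a choose Suc s) + colex_rank s (A - {a})"
proof -
  let ?X = "{B. B \<subseteq> {..<a} \<and> card B = Suc s}"
  let ?Y = "{B \<in> ssets s. colex_weight B < colex_weight (A - {a})}"
  have A: "finite A" "A \<noteq> {}"
    using assms(1) unfolding ssets_def by auto
  then have "A - {a} \<subseteq> {..<a}"
    unfolding a_def by (intro Diff_Max_subset_lessThan)
  then have "colex_weight (A - {a}) < 2 ^ a"
    using A colex_weight_less_power_iff by auto
  then have Y_below: "B \<subseteq> {..<a}" if "B \<in> ?Y" for B
    using that colex_weight_less_power_iff[of B a] unfolding ssets_def by auto
  then have "inj_on (insert a) ?Y"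
    by (intro inj_onI) (metis insert_ident lessThan_iff less_irrefl subsetD)
  moreover have "?X \<inter> insert a ` ?Y = {}"
    by auto
  moreover have "finite ?X"
    by (rule finite_subset[of _ "Pow {..<a}"]) auto
  moreover have "card ?X = a choose Suc s"
    using n_subsets[of "{..<a}" "Suc s"] by simp
  ultimately show ?thesis
    unfolding colex_rank_def ssets_weight_less_Max_split[OF A, folded a_def]
    using finite_ssets_weight_less by (simp add: card_Un_disjoint card_image)
qed

lemma cascade_value_Nil [simp]: "cascade_value s [] = 0"
  unfolding cascade_value_def by simp

lemma cascade_value_Cons:
  "cascade_value s (x # xs) = (x choose s) + cascade_value (s - 1) xs"
  unfolding cascade_value_def length_Cons sum.lessThan_Suc_shift by simp

lemma cascade_value_append:
  "cascade_value s (xs @ ys) = cascade_value s xs + cascade_value (s - length xs) ys"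
  by (induction xs arbitrary: s) (simp_all add: cascade_value_Cons)

lemma cascade_value_rev_upt:
  "j \<le> N \<Longrightarrow> cascade_value j (rev [N - j..<N]) = (N choose j) - 1"
proof (induction j arbitrary: N)
  case (Suc j)
  then obtain M where M: "N = Suc M" "j \<le> M"
    by (cases N) auto
  then have "rev [N - Suc j..<N] = M # rev [M - j..<M]"
    by (simp add: upt_Suc_append)
  then have "cascade_value (Suc j) (rev [N - Suc j..<N]) = (M choose Suc j) + ((M choose j) - 1)"
    using Suc.IH[OF M(2)] by (simp add: cascade_value_Cons)
  also have "\<dots> = (N choose Suc j) - 1"
    using M zero_less_binomial[OF M(2)] by (simp, linarith)
  finally show ?case .
qed simp

lemma sorted_wrt_greater_imp_distinct: "sorted_wrt (>) (xs :: 'a::linorder list) \<Longrightarrow> distinct xs"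
  by (induction xs) auto

lemma colex_rank_set_sorted:
  "sorted_wrt (>) xs \<Longrightarrow> colex_rank (length xs) (set xs) = cascade_value (length xs) xs"
proof (induction xs)
  case Nil
  then show ?case
    unfolding colex_rank_def colex_weight_def by simp
next
  case (Cons x xs)
  then have "x \<notin> set xs" "distinct xs"
    by (auto intro: sorted_wrt_greater_imp_distinct)
  then have "set (x # xs) \<in> ssets (Suc (length xs))"
    unfolding ssets_def by (simp add: distinct_card)
  moreover have "Max (set (x # xs)) = x" "set (x # xs) - {x} = set xs"
    using Cons.prems \<open>x \<notin> set xs\<close> by (auto intro!: Max_eqI)
  ultimately show ?case
    using Cons colex_rank_Max[of "set (x # xs)" "length xs"] by (simp add: cascade_value_Cons)
qed

lemma strict_cascade_sorted: "strict_cascade s ns \<Longrightarrow> sorted_wrt (>) ns"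
  unfolding strict_cascade_def
  by (simp add: sorted_wrt_iff_nth_Suc_transp[of "(>)"] transp_def)

lemma strict_cascade_predecessor:
  assumes "strict_cascade s ns" "ns \<noteq> []"
  obtains E where "E \<in> ssets s" "colex_rank s E = cascade_value s ns - 1"
    and "Min E = last ns + length ns - Suc s"
proof -
  define N where "N = last ns"
  define j where "j = Suc s - length ns"
  define E where "E = set (butlast ns @ rev [N - j..<N])"
  have ns: "ns = butlast ns @ [N]"
    using assms(2) unfolding N_def by simp
  have L: "length ns \<le> s" "1 \<le> length ns"
    using assms(1,2) unfolding strict_cascade_def by (auto simp: Suc_le_eq)
  have "length ns - 1 < length ns"
    using L by simp
  with assms(1) have "s - (length ns - 1) \<le> ns ! (length ns - 1)"
    unfolding strict_cascade_def by blast
  then have j: "1 \<le> j" "j \<le> N"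
    using L assms(2) unfolding N_def j_def by (auto simp: last_conv_nth)
  have "sorted_wrt (>) (butlast ns @ [N])"
    using strict_cascade_sorted[OF assms(1)] ns by simp
  then have butlast_sorted: "sorted_wrt (>) (butlast ns)"
    and butlast_above: "\<forall>x \<in> set (butlast ns). N < x"
    by (simp_all add: sorted_wrt_append)
  have sorted: "sorted_wrt (>) (butlast ns @ rev [N - j..<N])"
    using butlast_sorted butlast_above by (auto simp: sorted_wrt_append sorted_wrt_rev)
  have length: "length (butlast ns @ rev [N - j..<N]) = s"
    using L j unfolding j_def by simp
  have "card E = s"
    using distinct_card[OF sorted_wrt_greater_imp_distinct[OF sorted]] length
    unfolding E_def by argo
  then have E_ssets: "E \<in> ssets s"
    unfolding ssets_def E_def by simp
  have "cascade_value s ns = cascade_value s (butlast ns) + (N choose j)"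
    using L by (subst ns) (simp add: cascade_value_append cascade_value_Cons j_def)
  moreover have "colex_rank s E = cascade_value s (butlast ns @ rev [N - j..<N])"
    using colex_rank_set_sorted[OF sorted] unfolding length E_def .
  moreover have "s - (length ns - 1) = j"
    using L unfolding j_def by simp
  ultimately have rank: "colex_rank s E = cascade_value s ns - 1"
    using j zero_less_binomial[of j N] by (simp add: cascade_value_append cascade_value_rev_upt, linarith)
  have "Min E = N - j"
    using butlast_above j unfolding E_def by (intro Min_eqI) force+
  then show thesis
    using that[OF E_ssets rank] j unfolding N_def j_def by simp
qed

section \<open>Cliques of the colex graph\<close>

definition colex_cliques :: "nat \<Rightarrow> nat \<Rightarrow> nat \<Rightarrow> nat set set" where
  "colex_cliques t s m = {T \<in> ssets t. \<forall>S. S \<subseteq> T \<and> card S = s \<longrightarrow> S \<in> colex_graph s m}"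

lemma kts_eq_card_colex_cliques: "kts t s m = card (colex_cliques t s m)"
  unfolding kts_def colex_cliques_def ..

lemma colex_cliques_mono: "m \<le> m' \<Longrightarrow> colex_cliques t s m \<subseteq> colex_cliques t s m'"
  unfolding colex_cliques_def colex_graph_eq by auto

lemma finite_colex_graph: "finite (colex_graph s m)"
proof -
  have "inj_on (colex_rank s) (colex_graph s m)"
    using colex_rank_inj_on unfolding colex_graph_eq by (rule inj_on_subset) auto
  moreover have "colex_rank s ` colex_graph s m \<subseteq> {..<m}"
    unfolding colex_graph_eq by auto
  ultimately show ?thesis
    using finite_imageD finite_subset by blast
qed

lemma finite_colex_cliques:
  assumes "1 \<le> s" "s \<le> t"
  shows "finite (colex_cliques t s m)"
proof (rule finite_subset)
  show "colex_cliques t s m \<subseteq> Pow (\<Union> (colex_graph s m))"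
  proof
    fix T assume T: "T \<in> colex_cliques t s m"
    have "x \<in> \<Union> (colex_graph s m)" if "x \<in> T" for x
    proof -
      have "s - 1 \<le> card (T - {x})"
        using T that assms(2) unfolding colex_cliques_def ssets_def by simp
      then obtain B where B: "B \<subseteq> T - {x}" "card B = s - 1" "finite B"
        by (rule obtain_subset_with_card_n)
      moreover have "x \<notin> B"
        using B by auto
      ultimately have "insert x B \<subseteq> T" "card (insert x B) = s"
        using that assms(1) by auto
      then show ?thesis
        using T unfolding colex_cliques_def by blast
    qed
    then show "T \<in> Pow (\<Union> (colex_graph s m))" by auto
  qed
  show "finite (Pow (\<Union> (colex_graph s m)))"
    using finite_colex_graph unfolding colex_graph_eq ssets_def by auto
qed

lemma kts_less_Suc_iff:
  assumes "1 \<le> s" "s \<le> t"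
  shows "kts t s m < kts t s (Suc m) \<longleftrightarrow> \<not> colex_cliques t s (Suc m) \<subseteq> colex_cliques t s m"
proof -
  have "colex_cliques t s m \<subseteq> colex_cliques t s (Suc m)"
    by (rule colex_cliques_mono) simp
  then show ?thesis
    using finite_colex_cliques[OF assms] unfolding kts_eq_card_colex_cliques
    by (metis less_irrefl psubset_card_mono psubsetI subset_antisym)
qed

lemma colex_graph_Suc:
  assumes "E \<in> ssets s" "colex_rank s E = m"
  shows "colex_graph s (Suc m) = insert E (colex_graph s m)"
  using assms colex_rank_inj_on[of s] unfolding colex_graph_eq inj_on_def
  by (auto simp: less_Suc_eq)

lemma new_colex_clique_shape:
  assumes "1 \<le> s" "E \<in> ssets s" "colex_rank s E = m"
    and "T \<in> colex_cliques t s (Suc m)" "T \<notin> colex_cliques t s m"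
  shows "E \<subseteq> T" and "T - E \<subseteq> {..<Min E}"
proof -
  have T: "\<And>S. S \<subseteq> T \<Longrightarrow> card S = s \<Longrightarrow> S \<in> colex_graph s (Suc m)"
    using assms(4) unfolding colex_cliques_def by auto
  obtain S where S: "S \<subseteq> T" "card S = s" "S \<notin> colex_graph s m"
    using assms(4,5) unfolding colex_cliques_def by auto
  then show "E \<subseteq> T"
    using T colex_graph_Suc[OF assms(2,3)] by auto
  have E: "finite E" "card E = s" "E \<noteq> {}"
    using assms(1,2) unfolding ssets_def by auto
  then have "Min E \<in> E"
    by simp
  show "T - E \<subseteq> {..<Min E}"
  proof
    fix x assume x: "x \<in> T - E"
    show "x \<in> {..<Min E}"
    proof (rule ccontr)
      assume "x \<notin> {..<Min E}"
      with x E \<open>Min E \<in> E\<close> have "Min E < x"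
        by (metis lessThan_iff nat_neq_iff DiffD2)
      define S' where "S' = insert x (E - {Min E})"
      have S': "S' \<in> ssets s" "S' \<subseteq> T"
        using E x \<open>Min E \<in> E\<close> \<open>E \<subseteq> T\<close> assms(1) unfolding S'_def ssets_def by auto
      have "colex_weight E < colex_weight S'"
        using E x \<open>Min E \<in> E\<close> \<open>Min E < x\<close> unfolding S'_def
        by (intro colex_weight_less[where x = x]) auto
      then have "m < colex_rank s S'"
        using colex_rank_strict_mono[OF assms(2) S'(1)] assms(3) by simp
      moreover have "colex_rank s S' < Suc m"
        using T[OF S'(2)] S'(1) unfolding colex_graph_eq ssets_def by simp
      ultimately show False by simp
    qed
  qed
qed

lemma new_colex_clique_Un_lessThan:
  assumes "E \<in> ssets s" "colex_rank s E = m" "s \<le> t" "t - s \<le> Min E"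
  shows "E \<union> {..<t - s} \<in> colex_cliques t s (Suc m) - colex_cliques t s m"
proof -
  let ?T = "E \<union> {..<t - s}"
  have E: "finite E" "card E = s"
    using assms(1) unfolding ssets_def by auto
  have "E \<inter> {..<t - s} = {}"
    using E assms(4) Min_le by fastforce
  then have "?T \<in> ssets t"
    using E assms(3) unfolding ssets_def by (simp add: card_Un_disjoint)
  moreover have "S \<in> colex_graph s (Suc m)" if S: "S \<subseteq> ?T" "card S = s" for S
  proof (cases "E \<subseteq> S")
    case True
    have "finite S"
      using S(1) E(1) by (meson finite_Un finite_lessThan finite_subset)
    then have "S = E"
      using card_seteq[OF _ True] S E by simp
    then show ?thesis
      using colex_graph_Suc[OF assms(1,2)] by simp
  next
    case False
    then obtain x where x: "x \<in> E - S" by auto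
    have "Min E \<le> x"
      using E(1) x by simp
    then have "\<forall>y\<in>S - E. y < x"
      using S(1) assms(4) by auto
    then have "colex_weight S < colex_weight E"
      using S E x by (intro colex_weight_less[where x = x]) (auto intro: finite_subset)
    then have "colex_rank s S < m"
      using colex_rank_strict_mono[OF _ assms(1), of S] S E assms(2)
      unfolding ssets_def by (auto intro: finite_subset)
    then show ?thesis
      using S E unfolding colex_graph_eq ssets_def by (auto intro: finite_subset)
  qed
  moreover have "E \<notin> colex_graph s m"
    using assms(2) unfolding colex_graph_eq by simp
  ultimately show ?thesis
    using E unfolding colex_cliques_def by auto
qed

lemma kts_Suc_greater_iff:
  assumes "1 \<le> s" "s \<le> t" "E \<in> ssets s" "colex_rank s E = m"
  shows "kts t s m < kts t s (Suc m) \<longleftrightarrow> t - s \<le> Min E"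
proof
  assume "kts t s m < kts t s (Suc m)"
  then obtain T where T: "T \<in> colex_cliques t s (Suc m)" "T \<notin> colex_cliques t s m"
    using kts_less_Suc_iff[OF assms(1,2)] by blast
  have "card T = t" "finite E" "card E = s"
    using T(1) assms(3) unfolding colex_cliques_def ssets_def by auto
  then have "t - s = card (T - E)"
    using new_colex_clique_shape(1)[OF assms(1,3,4) T] by (simp add: card_Diff_subset)
  also have "\<dots> \<le> card {..<Min E}"
    using new_colex_clique_shape(2)[OF assms(1,3,4) T] by (intro card_mono) auto
  finally show "t - s \<le> Min E" by simp
next
  assume "t - s \<le> Min E"
  then show "kts t s m < kts t s (Suc m)"
    using new_colex_clique_Un_lessThan[OF assms(3,4,2)] kts_less_Suc_iff[OF assms(1,2)] by blast
qed

theorem mainTheorem10: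
  fixes s t n m :: nat and ns :: "nat list"
  assumes "1 \<le> s" and "s < t" and "t \<le> n"
    and "0 < m" and "m < n choose s"
    and "strict_cascade s ns" and "cascade_value s ns = m + 1"
  shows "kts t s (m + 1) > kts t s m \<longleftrightarrow>
         t \<le> length ns + ns ! (length ns - 1) - 1"
proof -
  have "ns \<noteq> []"
    using assms(7) by auto
  then obtain E where E: "E \<in> ssets s" "colex_rank s E = m"
    and Min_E: "Min E = last ns + length ns - Suc s"
    using strict_cascade_predecessor[OF assms(6)] assms(7) by auto
  have "kts t s (m + 1) > kts t s m \<longleftrightarrow> t - s \<le> Min E"
    using kts_Suc_greater_iff[OF assms(1) _ E] assms(2) by simp
  also have "\<dots> \<longleftrightarrow> t \<le> length ns + last ns - 1"
    using Min_E assms(2) by linarith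
  finally show ?thesis
    using \<open>ns \<noteq> []\<close> by (simp add: last_conv_nth)
qed

end
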